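(* Let $\{\varphi_\alpha\}$ be a net in $MA(G,\sigma)$ such that (i) $\varphi_\alpha\to1$ pointwise on $G$, (ii) $\sup_\alpha\|M_{\varphi_\alpha}\|<\infty$, and (iii) for each $\alpha$ there is $\kappa_\alpha:G\to[1,\infty)$ such that $G$ is $\kappa_\alpha$-decaying and $\|\varphi_\alpha\kappa_\alpha\|_\infty<\infty$. Then $\{\varphi_\alpha\}$ is a bounded Fourier summing net for $(G,\sigma)$.
   Context: $G$ is a discrete group, $\sigma:G\times G\to\mathbb{T}$ a normalized 2-cocycle ($\sigma(g,h)\sigma(gh,k)=\sigma(h,k)\sigma(g,hk)$, $\sigma(g,e)=\sigma(e,g)=1$); $\Lambda_\sigma(g)$ is the unitary on $\ell^2(G)$ with $(\Lambda_\sigma(g)\xi)(h)=\sigma(g,g^{-1}h)\xi(g^{-1}h)$, $\lambda=\Lambda_1$; $C^*_r(G,\sigma)$ is the operator-norm closure of $\mathrm{span}\,\Lambda_\sigma(G)$; for $x\in C^*_r(G,\sigma)$, $\widehat x=x\delta_e$. For $\varphi:G\to\mathbb{C}$, $M_\varphi$ is the linear map on $\mathrm{span}\,\Lambda_\sigma(G)$ with $M_\varphi(\Lambda_\sigma(g))=\varphi(g)\Lambda_\sigma(g)$; $\varphi\in MA(G,\sigma)$ if it is bounded in operator norm, and then $M_\varphi$ denotes the extension to $C^*_r(G,\sigma)$. $MCF(G,\sigma)$ is the set of $\varphi$ such that $\sum_g\varphi(g)\widehat x(g)\Lambda_\sigma(g)$ converges in operator norm for all $x$. A Fourier summing net for $(G,\sigma)$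 is a net $\{\varphi_\alpha\}\subseteq MCF(G,\sigma)$ with $M_{\varphi_\alpha}(x)\to x$ in norm for all $x\in C^*_r(G,\sigma)$; bounded means $\sup_\alpha\|M_{\varphi_\alpha}\|<\infty$. $\mathcal{K}(G)$ = finitely supported functions, $\pi_\lambda(f)=\sum_g f(g)\lambda(g)$; for $\kappa:G\to[1,\infty)$, $\|\xi\|_{2,\kappa}=\|\xi\kappa\|_2$, and $G$ is $\kappa$-decaying if $f\mapsto\pi_\lambda(f)$ is bounded from $(\mathcal{K}(G),\|\cdot\|_{2,\kappa})$ to $C^*_r(G,1)$ with operator norm. *)

theory Defs
  imports "HOL-Analysis.Analysis"
begin

text \<open>The discrete group G is a type of class group_add (written additively,
 not necessarily commutative): g h is g + h, e is 0, g inverse is - g.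
 Vectors are functions 'g \<Rightarrow> complex, operators are maps on such functions;
 only their behaviour on l2(G) matters.\<close>

type_synonym 'g vec = "'g \<Rightarrow> complex"
type_synonym 'g op = "'g vec \<Rightarrow> 'g vec"

definition l2 :: "'g vec \<Rightarrow> bool" where
  "l2 \<xi> \<longleftrightarrow> (\<lambda>h. (cmod (\<xi> h))\<^sup>2) summable_on UNIV"

definition l2norm :: "'g vec \<Rightarrow> real" where
  "l2norm \<xi> = sqrt (\<Sum>\<^sub>\<infinity>h. (cmod (\<xi> h))\<^sup>2)"

definition bounded_op :: "'g op \<Rightarrow> bool" where
  "bounded_op T \<longleftrightarrow>
     (\<forall>\<xi>. l2 \<xi> \<longrightarrow> l2 (T \<xi>)) \<and>
     (\<forall>\<xi> \<eta> c. l2 \<xi> \<longrightarrow> l2 \<eta> \<longrightarrow> T (\<lambda>h. \<xi> h + c * \<eta> h) = (\<lambda>h. T \<xi> h + c * T \<eta> h)) \<and>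
     (\<exists>C. \<forall>\<xi>. l2 \<xi> \<longrightarrow> l2norm (T \<xi>) \<le> C * l2norm \<xi>)"

definition opnorm :: "'g op \<Rightarrow> real" where
  "opnorm T = Sup {l2norm (T \<xi>) | \<xi>. l2 \<xi> \<and> l2norm \<xi> \<le> 1}"

definition op_diff :: "'g op \<Rightarrow> 'g op \<Rightarrow> 'g op" where
  "op_diff S T = (\<lambda>\<xi> h. S \<xi> h - T \<xi> h)"

definition cocycle :: "('g::group_add \<Rightarrow> 'g \<Rightarrow> complex) \<Rightarrow> bool" where
  "cocycle \<sigma> \<longleftrightarrow> (\<forall>g h. cmod (\<sigma> g h) = 1) \<and>
     (\<forall>g h k. \<sigma> g h * \<sigma> (g + h) k = \<sigma> h k * \<sigma> g (h + k)) \<and>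
     (\<forall>g. \<sigma> g 0 = 1 \<and> \<sigma> 0 g = 1)"

definition Lambda :: "('g::group_add \<Rightarrow> 'g \<Rightarrow> complex) \<Rightarrow> 'g \<Rightarrow> 'g op" where
  "Lambda \<sigma> g = (\<lambda>\<xi> h. \<sigma> g (- g + h) * \<xi> (- g + h))"

definition finsupp :: "('g \<Rightarrow> complex) \<Rightarrow> bool" where
  "finsupp f \<longleftrightarrow> finite {g. f g \<noteq> 0}"

definition pi_s :: "('g::group_add \<Rightarrow> 'g \<Rightarrow> complex) \<Rightarrow> ('g \<Rightarrow> complex) \<Rightarrow> 'g op" where
  "pi_s \<sigma> f = (\<lambda>\<xi> h. \<Sum>g\<in>{g. f g \<noteq> 0}. f g * Lambda \<sigma> g \<xi> h)"

definition Cr :: "('g::group_add \<Rightarrow> 'g \<Rightarrow> complex) \<Rightarrow> 'g op set" where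
  "Cr \<sigma> = {x. bounded_op x \<and>
      (\<forall>\<epsilon>>0. \<exists>f. finsupp f \<and> opnorm (op_diff x (pi_s \<sigma> f)) < \<epsilon>)}"

definition hat :: "'g::group_add op \<Rightarrow> 'g vec" where
  "hat x = x (\<lambda>h. if h = 0 then 1 else 0)"

definition MA :: "('g::group_add \<Rightarrow> 'g \<Rightarrow> complex) \<Rightarrow> ('g \<Rightarrow> complex) set" where
  "MA \<sigma> = {\<phi>. \<exists>C. \<forall>f. finsupp f \<longrightarrow>
      opnorm (pi_s \<sigma> (\<lambda>g. \<phi> g * f g)) \<le> C * opnorm (pi_s \<sigma> f)}"

definition Mnorm :: "('g::group_add \<Rightarrow> 'g \<Rightarrow> complex) \<Rightarrow> ('g \<Rightarrow> complex) \<Rightarrow> real" where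
  "Mnorm \<sigma> \<phi> = Sup {opnorm (pi_s \<sigma> (\<lambda>g. \<phi> g * f g)) | f. finsupp f \<and> opnorm (pi_s \<sigma> f) \<le> 1}"

text \<open>y is the value at x of the continuous extension of M_phi to C*_r(G,sigma).\<close>
definition is_Mext :: "('g::group_add \<Rightarrow> 'g \<Rightarrow> complex) \<Rightarrow> ('g \<Rightarrow> complex) \<Rightarrow> 'g op \<Rightarrow> 'g op \<Rightarrow> bool" where
  "is_Mext \<sigma> \<phi> x y \<longleftrightarrow> bounded_op y \<and>
     (\<forall>\<epsilon>>0. \<exists>\<delta>>0. \<forall>f. finsupp f \<longrightarrow> opnorm (op_diff x (pi_s \<sigma> f)) < \<delta> \<longrightarrow>
         opnorm (op_diff y (pi_s \<sigma> (\<lambda>g. \<phi> g * f g))) < \<epsilon>)"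

definition Mext :: "('g::group_add \<Rightarrow> 'g \<Rightarrow> complex) \<Rightarrow> ('g \<Rightarrow> complex) \<Rightarrow> 'g op \<Rightarrow> 'g op" where
  "Mext \<sigma> \<phi> x = (SOME y. is_Mext \<sigma> \<phi> x y)"

text \<open>MCF: sum_g phi(g) hat x(g) Lambda_sigma(g) converges in operator norm
  (as an unordered sum over G, i.e. along finite subsets) for every x.\<close>
definition MCF :: "('g::group_add \<Rightarrow> 'g \<Rightarrow> complex) \<Rightarrow> ('g \<Rightarrow> complex) set" where
  "MCF \<sigma> = {\<phi>. \<forall>x\<in>Cr \<sigma>. \<exists>y. bounded_op y \<and>
      (\<forall>\<epsilon>>0. \<exists>F. finite F \<and> (\<forall>F'. finite F' \<and> F \<subseteq> F' \<longrightarrow>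
         opnorm (op_diff y (\<lambda>\<xi> h. \<Sum>g\<in>F'. \<phi> g * hat x g * Lambda \<sigma> g \<xi> h)) < \<epsilon>))}"

definition directed :: "'i::preorder itself \<Rightarrow> bool" where
  "directed _ \<longleftrightarrow> (\<forall>a b::'i. \<exists>c. a \<le> c \<and> b \<le> c)"

definition fourier_summing_net ::
  "('g::group_add \<Rightarrow> 'g \<Rightarrow> complex) \<Rightarrow> ('i::preorder \<Rightarrow> 'g \<Rightarrow> complex) \<Rightarrow> bool" where
  "fourier_summing_net \<sigma> \<phi> \<longleftrightarrow> (\<forall>\<alpha>. \<phi> \<alpha> \<in> MCF \<sigma>) \<and>
     (\<forall>x\<in>Cr \<sigma>. \<forall>\<epsilon>>0. \<exists>\<alpha>0. \<forall>\<alpha>\<ge>\<alpha>0. opnorm (op_diff (Mext \<sigma> (\<phi> \<alpha>) x) x) < \<epsilon>)"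

definition bounded_fourier_summing_net ::
  "('g::group_add \<Rightarrow> 'g \<Rightarrow> complex) \<Rightarrow> ('i::preorder \<Rightarrow> 'g \<Rightarrow> complex) \<Rightarrow> bool" where
  "bounded_fourier_summing_net \<sigma> \<phi> \<longleftrightarrow> fourier_summing_net \<sigma> \<phi> \<and>
     (\<exists>C. \<forall>\<alpha>. Mnorm \<sigma> (\<phi> \<alpha>) \<le> C)"

text \<open>G is kappa-decaying (untwisted lambda = Lambda with trivial cocycle).\<close>
definition kappa_decaying :: "('g::group_add \<Rightarrow> real) \<Rightarrow> bool" where
  "kappa_decaying \<kappa> \<longleftrightarrow> (\<exists>C. \<forall>f. finsupp f \<longrightarrow>
      opnorm (pi_s (\<lambda>_ _. 1) f) \<le> C * l2norm (\<lambda>g. f g * complex_of_real (\<kappa> g)))"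

end

theory Submission
  imports Defs
begin

text \<open>A multiplier phi in MA(G,sigma) is bounded on the span of the Lambda_sigma(g), hence
  extends to C*_r(G,sigma), and every estimate can be tested on finitely supported approximants
  pi_sigma(f) of x, because ||f - x^||_2 <= ||pi_sigma(f) - x||. For finite F containing the
  support of f, M_phi(pi_sigma f) minus the Fourier partial sum of M_phi(x) over F is pi_sigma(d)
  with d = phi (f - x^) restricted to F. As sigma is unimodular, the norm of pi_sigma(d) is at
  most that of the untwisted convolution by |d|, which kappa-decay bounds by
  K ||phi kappa||_inf ||f - x^||_2; so phi is in MCF(G,sigma). Finally M_phi_alpha(x) -> x by the
  uniform bound on ||M_phi_alpha|| and the convergence phi_alpha -> 1 on the finite support of f.\<close>

lemma l2norm_nonneg: "0 \<le> l2norm \<xi>"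
  unfolding l2norm_def by (simp add: infsum_nonneg)

lemma L2_set_le_l2norm:
  assumes "l2 \<xi>" "finite F"
  shows "L2_set (\<lambda>h. cmod (\<xi> h)) F \<le> l2norm \<xi>"
proof -
  have "(\<Sum>h\<in>F. (cmod (\<xi> h))\<^sup>2) \<le> (\<Sum>\<^sub>\<infinity>h. (cmod (\<xi> h))\<^sup>2)"
    using assms unfolding l2_def by (intro finite_sum_le_infsum) auto
  then show ?thesis unfolding L2_set_def l2norm_def by simp
qed

lemma l2_l2norm_leI:
  assumes "\<And>F. finite F \<Longrightarrow> L2_set (\<lambda>h. cmod (\<xi> h)) F \<le> B"
  shows "l2 \<xi> \<and> l2norm \<xi> \<le> B"
proof -
  have B: "0 \<le> B" using assms[of "{}"] by simp
  have sums: "(\<Sum>h\<in>F. (cmod (\<xi> h))\<^sup>2) \<le> B\<^sup>2" if "finite F" for F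
    using sqrt_le_D assms[OF that] unfolding L2_set_def by blast
  have summable: "(\<lambda>h. (cmod (\<xi> h))\<^sup>2) summable_on UNIV"
    by (rule nonneg_bdd_above_summable_on) (auto intro!: bdd_aboveI[where M="B\<^sup>2"] sums)
  have "(\<Sum>\<^sub>\<infinity>h. (cmod (\<xi> h))\<^sup>2) \<le> B\<^sup>2"
    by (rule infsum_le_finite_sums[OF summable]) (use sums in auto)
  then have "l2norm \<xi> \<le> B"
    unfolding l2norm_def using real_sqrt_le_mono B by fastforce
  with summable show ?thesis unfolding l2_def by auto
qed

lemma l2_cong_norm:
  assumes "\<And>h. cmod (\<xi> h) = cmod (\<eta> h)"
  shows "l2 \<xi> = l2 \<eta>" "l2norm \<xi> = l2norm \<eta>"
  unfolding l2_def l2norm_def using assms by auto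

lemma l2_norm_le:
  assumes "l2 \<eta>" "\<And>h. cmod (\<xi> h) \<le> r * cmod (\<eta> h)" "0 \<le> r"
  shows "l2 \<xi> \<and> l2norm \<xi> \<le> r * l2norm \<eta>"
proof (rule l2_l2norm_leI)
  fix F :: "'a set" assume F: "finite F"
  have "L2_set (\<lambda>h. cmod (\<xi> h)) F \<le> L2_set (\<lambda>h. r * cmod (\<eta> h)) F"
    by (rule L2_set_mono) (use assms in auto)
  also have "\<dots> = r * L2_set (\<lambda>h. cmod (\<eta> h)) F"
    using L2_set_right_distrib[OF assms(3)] by metis
  also have "\<dots> \<le> r * l2norm \<eta>"
    using L2_set_le_l2norm[OF assms(1) F] assms(3) by (simp add: mult_left_mono)
  finally show "L2_set (\<lambda>h. cmod (\<xi> h)) F \<le> r * l2norm \<eta>" .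
qed

lemma l2_add:
  assumes "l2 \<xi>" "l2 \<eta>"
  shows "l2 (\<lambda>h. \<xi> h + \<eta> h) \<and> l2norm (\<lambda>h. \<xi> h + \<eta> h) \<le> l2norm \<xi> + l2norm \<eta>"
proof (rule l2_l2norm_leI)
  fix F :: "'a set" assume F: "finite F"
  have "L2_set (\<lambda>h. cmod (\<xi> h + \<eta> h)) F \<le> L2_set (\<lambda>h. cmod (\<xi> h) + cmod (\<eta> h)) F"
    by (rule L2_set_mono) (auto simp: norm_triangle_ineq)
  also have "\<dots> \<le> L2_set (\<lambda>h. cmod (\<xi> h)) F + L2_set (\<lambda>h. cmod (\<eta> h)) F"
    by (rule L2_set_triangle_ineq)
  also have "\<dots> \<le> l2norm \<xi> + l2norm \<eta>"
    using L2_set_le_l2norm[OF assms(1) F] L2_set_le_l2norm[OF assms(2) F] by simp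
  finally show "L2_set (\<lambda>h. cmod (\<xi> h + \<eta> h)) F \<le> l2norm \<xi> + l2norm \<eta>" .
qed

lemma l2_mult:
  assumes "l2 \<xi>"
  shows "l2 (\<lambda>h. c * \<xi> h) \<and> l2norm (\<lambda>h. c * \<xi> h) \<le> cmod c * l2norm \<xi>"
  by (rule l2_norm_le[OF assms]) (auto simp: norm_mult)

lemma l2_diff:
  assumes "l2 \<xi>" "l2 \<eta>"
  shows "l2 (\<lambda>h. \<xi> h - \<eta> h) \<and> l2norm (\<lambda>h. \<xi> h - \<eta> h) \<le> l2norm \<xi> + l2norm \<eta>"
  using l2_add[OF assms(1) conjunct1[OF l2_mult[OF assms(2), of "-1"]]]
    l2_mult[OF assms(2), of "-1"] by simp

lemma norm_le_l2norm:
  assumes "l2 \<xi>"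
  shows "cmod (\<xi> h) \<le> l2norm \<xi>"
  using L2_set_le_l2norm[OF assms, of "{h}"] unfolding L2_set_def by simp

lemma l2norm_eq_0:
  assumes "l2 \<xi>" "l2norm \<xi> = 0"
  shows "\<xi> = (\<lambda>h. 0)"
  using norm_le_l2norm[OF assms(1)] assms(2) by fastforce

lemma l2_zero [simp]: "l2 (\<lambda>h. 0)" "l2norm (\<lambda>h. 0) = 0"
  unfolding l2_def l2norm_def by simp_all

lemma l2_sum:
  assumes "finite S" "\<And>g. g \<in> S \<Longrightarrow> l2 (v g) \<and> l2norm (v g) \<le> b g"
  shows "l2 (\<lambda>h. \<Sum>g\<in>S. v g h) \<and> l2norm (\<lambda>h. \<Sum>g\<in>S. v g h) \<le> sum b S"
  using assms
proof (induction S rule: finite_induct)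
  case (insert a S)
  then have "l2 (v a) \<and> l2norm (v a) \<le> b a"
    and "l2 (\<lambda>h. \<Sum>g\<in>S. v g h) \<and> l2norm (\<lambda>h. \<Sum>g\<in>S. v g h) \<le> sum b S"
    by auto
  moreover have "(\<lambda>h. \<Sum>g\<in>insert a S. v g h) = (\<lambda>h. v a h + (\<Sum>g\<in>S. v g h))"
    using insert(1,2) by simp
  ultimately show ?case
    using l2_add[of "v a" "\<lambda>h. \<Sum>g\<in>S. v g h"] insert(1,2)
    by (auto intro: order_trans[OF _ add_mono])
qed simp

lemma l2_pointwise_limit:
  assumes bound: "\<forall>\<^sub>F n in sequentially. l2 (\<xi>s n) \<and> l2norm (\<xi>s n) \<le> b n"
    and "\<And>h. (\<lambda>n. \<xi>s n h) \<longlonglongrightarrow> \<xi> h"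
    and "b \<longlonglongrightarrow> B"
  shows "l2 \<xi> \<and> l2norm \<xi> \<le> B"
proof (rule l2_l2norm_leI)
  fix F :: "'a set" assume F: "finite F"
  have "(\<lambda>n. L2_set (\<lambda>h. cmod (\<xi>s n h)) F) \<longlonglongrightarrow> L2_set (\<lambda>h. cmod (\<xi> h)) F"
    unfolding L2_set_def by (intro tendsto_intros assms(2))
  moreover have "\<forall>\<^sub>F n in sequentially. L2_set (\<lambda>h. cmod (\<xi>s n h)) F \<le> b n"
    using bound by eventually_elim (use L2_set_le_l2norm F order_trans in blast)
  ultimately show "L2_set (\<lambda>h. cmod (\<xi> h)) F \<le> B"
    using assms(3) by (intro tendsto_le[OF trivial_limit_sequentially])
qed

lemma bounded_op_l2: "bounded_op T \<Longrightarrow> l2 \<xi> \<Longrightarrow> l2 (T \<xi>)"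
  unfolding bounded_op_def by blast

lemma bounded_op_linear:
  "bounded_op T \<Longrightarrow> l2 \<xi> \<Longrightarrow> l2 \<eta> \<Longrightarrow> T (\<lambda>h. \<xi> h + c * \<eta> h) = (\<lambda>h. T \<xi> h + c * T \<eta> h)"
  unfolding bounded_op_def by blast

lemma bounded_op_zero:
  assumes "bounded_op T"
  shows "T (\<lambda>h. 0) = (\<lambda>h. 0)"
proof -
  have "T (\<lambda>h. 0) = (\<lambda>h. T (\<lambda>h. 0) h + 1 * T (\<lambda>h. 0) h)"
    using bounded_op_linear[OF assms l2_zero(1) l2_zero(1), of 1] by simp
  then have "T (\<lambda>h. 0) h = T (\<lambda>h. 0) h + T (\<lambda>h. 0) h" for h
    by (metis mult_1)
  then show ?thesis by (intro ext) simp
qed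

lemma bounded_op_mult:
  assumes "bounded_op T" "l2 \<xi>"
  shows "T (\<lambda>h. c * \<xi> h) = (\<lambda>h. c * T \<xi> h)"
  using bounded_op_linear[OF assms(1) l2_zero(1) assms(2), of c] bounded_op_zero[OF assms(1)]
  by simp

lemma bounded_opI:
  assumes "\<And>\<xi>. l2 \<xi> \<Longrightarrow> l2 (T \<xi>) \<and> l2norm (T \<xi>) \<le> C * l2norm \<xi>"
    and "\<And>\<xi> \<eta> c. l2 \<xi> \<Longrightarrow> l2 \<eta> \<Longrightarrow> T (\<lambda>h. \<xi> h + c * \<eta> h) = (\<lambda>h. T \<xi> h + c * T \<eta> h)"
  shows "bounded_op T"
  unfolding bounded_op_def using assms by blast

lemma opnorm_leI:
  assumes "\<And>\<xi>. l2 \<xi> \<Longrightarrow> l2norm (T \<xi>) \<le> M * l2norm \<xi>" "0 \<le> M"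
  shows "opnorm T \<le> M"
  unfolding opnorm_def
proof (rule cSup_least)
  have "l2norm (T (\<lambda>h. 0)) \<in> {l2norm (T \<xi>) |\<xi>. l2 \<xi> \<and> l2norm \<xi> \<le> 1}"
    by auto
  then show "{l2norm (T \<xi>) |\<xi>. l2 \<xi> \<and> l2norm \<xi> \<le> 1} \<noteq> {}" by blast
next
  fix r assume "r \<in> {l2norm (T \<xi>) |\<xi>. l2 \<xi> \<and> l2norm \<xi> \<le> 1}"
  then obtain \<xi> where "r = l2norm (T \<xi>)" "l2 \<xi>" "l2norm \<xi> \<le> 1" by auto
  then show "r \<le> M"
    using assms(1)[of \<xi>] assms(2) mult_left_mono[of "l2norm \<xi>" 1 M] by auto
qed

lemma l2norm_le_opnorm:
  assumes "bounded_op T" "l2 \<xi>" "l2norm \<xi> \<le> 1"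
  shows "l2norm (T \<xi>) \<le> opnorm T"
proof -
  obtain C where C: "\<And>\<xi>. l2 \<xi> \<Longrightarrow> l2norm (T \<xi>) \<le> C * l2norm \<xi>"
    using assms(1) unfolding bounded_op_def by blast
  have "l2norm (T \<zeta>) \<le> max C 0" if "l2 \<zeta>" "l2norm \<zeta> \<le> 1" for \<zeta>
  proof -
    have "C * l2norm \<zeta> \<le> max C 0 * 1"
      using that(2) l2norm_nonneg[of \<zeta>] by (intro mult_mono) auto
    then show ?thesis using C[OF that(1)] by simp
  qed
  then have "bdd_above {l2norm (T \<xi>) |\<xi>. l2 \<xi> \<and> l2norm \<xi> \<le> 1}"
    by (intro bdd_aboveI[where M="max C 0"]) auto
  then show ?thesis
    unfolding opnorm_def by (rule cSup_upper[rotated]) (use assms in auto)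
qed

lemma opnorm_nonneg:
  assumes "bounded_op T"
  shows "0 \<le> opnorm T"
proof -
  have "l2norm (T (\<lambda>h. 0)) \<le> opnorm T"
    by (rule l2norm_le_opnorm) (use assms in auto)
  then show ?thesis using l2norm_nonneg order_trans by blast
qed

lemma l2norm_apply_le:
  assumes "bounded_op T" "l2 \<xi>"
  shows "l2norm (T \<xi>) \<le> opnorm T * l2norm \<xi>"
proof (cases "l2norm \<xi> = 0")
  case True
  then show ?thesis
    using l2norm_eq_0[OF assms(2)] bounded_op_zero[OF assms(1)] by simp
next
  case False
  define n where "n = l2norm \<xi>"
  have n: "0 < n" using False l2norm_nonneg[of \<xi>] unfolding n_def by auto
  define \<zeta> where "\<zeta> = (\<lambda>h. complex_of_real (1 / n) * \<xi> h)"
  have \<zeta>: "l2 \<zeta>" "l2norm \<zeta> \<le> 1"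
    using l2_mult[OF assms(2), of "complex_of_real (1 / n)"] n unfolding \<zeta>_def n_def
    by (auto simp: norm_divide)
  have "T \<xi> = (\<lambda>h. complex_of_real n * T \<zeta> h)"
    unfolding \<zeta>_def bounded_op_mult[OF assms] using n by auto
  then have "l2norm (T \<xi>) \<le> n * l2norm (T \<zeta>)"
    using l2_mult[OF bounded_op_l2[OF assms(1) \<zeta>(1)], of "complex_of_real n"] n by auto
  also have "\<dots> \<le> n * opnorm T"
    using l2norm_le_opnorm[OF assms(1) \<zeta>] n by auto
  finally show ?thesis unfolding n_def by (simp add: mult.commute)
qed

lemma bounded_op_diff:
  assumes "bounded_op A" "bounded_op B"
  shows "bounded_op (op_diff A B)"
proof (rule bounded_opI[where C="opnorm A + opnorm B"])
  fix \<xi> :: "'a vec" assume \<xi>: "l2 \<xi>"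
  have "l2 (op_diff A B \<xi>) \<and> l2norm (op_diff A B \<xi>) \<le> l2norm (A \<xi>) + l2norm (B \<xi>)"
    unfolding op_diff_def
    using l2_diff[OF bounded_op_l2[OF assms(1) \<xi>] bounded_op_l2[OF assms(2) \<xi>]] .
  then show "l2 (op_diff A B \<xi>) \<and> l2norm (op_diff A B \<xi>) \<le> (opnorm A + opnorm B) * l2norm \<xi>"
    using l2norm_apply_le[OF assms(1) \<xi>] l2norm_apply_le[OF assms(2) \<xi>]
    by (simp add: algebra_simps)
next
  fix \<xi> \<eta> :: "'a vec" and c assume "l2 \<xi>" "l2 \<eta>"
  then show "op_diff A B (\<lambda>h. \<xi> h + c * \<eta> h) = (\<lambda>h. op_diff A B \<xi> h + c * op_diff A B \<eta> h)"
    using bounded_op_linear[OF assms(1)] bounded_op_linear[OF assms(2)]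
    unfolding op_diff_def by (simp add: algebra_simps)
qed

lemma opnorm_mult_le:
  assumes "bounded_op T"
  shows "opnorm (\<lambda>\<xi> h. c * T \<xi> h) \<le> cmod c * opnorm T"
proof (rule opnorm_leI)
  fix \<xi> :: "'a vec" assume \<xi>: "l2 \<xi>"
  have "l2norm (\<lambda>h. c * T \<xi> h) \<le> cmod c * l2norm (T \<xi>)"
    using l2_mult[OF bounded_op_l2[OF assms \<xi>]] by auto
  also have "\<dots> \<le> cmod c * opnorm T * l2norm \<xi>"
    using l2norm_apply_le[OF assms \<xi>] by (simp add: mult_left_mono mult.assoc)
  finally show "l2norm (\<lambda>h. c * T \<xi> h) \<le> cmod c * opnorm T * l2norm \<xi>" .
qed (use opnorm_nonneg[OF assms] in auto)

lemma opnorm_triangle: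
  assumes "bounded_op A" "bounded_op B" "bounded_op C"
  shows "opnorm (op_diff A C) \<le> opnorm (op_diff A B) + opnorm (op_diff B C)"
proof (rule opnorm_leI)
  fix \<xi> :: "'a vec" assume \<xi>: "l2 \<xi>"
  have AB: "bounded_op (op_diff A B)" and BC: "bounded_op (op_diff B C)"
    using bounded_op_diff assms by auto
  have "op_diff A C \<xi> = (\<lambda>h. op_diff A B \<xi> h + op_diff B C \<xi> h)"
    unfolding op_diff_def by auto
  then have "l2norm (op_diff A C \<xi>) \<le> l2norm (op_diff A B \<xi>) + l2norm (op_diff B C \<xi>)"
    using l2_add[OF bounded_op_l2[OF AB \<xi>] bounded_op_l2[OF BC \<xi>]] by auto
  then show "l2norm (op_diff A C \<xi>) \<le> (opnorm (op_diff A B) + opnorm (op_diff B C)) * l2norm \<xi>"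
    using l2norm_apply_le[OF AB \<xi>] l2norm_apply_le[OF BC \<xi>] by (simp add: algebra_simps)
qed (use opnorm_nonneg[OF bounded_op_diff[OF assms(1,2)]]
        opnorm_nonneg[OF bounded_op_diff[OF assms(2,3)]] in simp)

lemma opnorm_diff_commute: "opnorm (op_diff A B) = opnorm (op_diff B A)"
proof -
  have "l2norm (op_diff A B \<xi>) = l2norm (op_diff B A \<xi>)" for \<xi>
    unfolding op_diff_def by (rule l2_cong_norm(2)) (simp add: norm_minus_commute)
  then show ?thesis unfolding opnorm_def by simp
qed

lemma l2_hat:
  fixes x :: "'g::group_add op"
  assumes "bounded_op x"
  shows "l2 (hat x) \<and> l2norm (hat x) \<le> opnorm x"
proof -
  let ?\<delta> = "\<lambda>h::'g. if h = 0 then 1 else (0::complex)"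
  have \<delta>: "l2 ?\<delta> \<and> l2norm ?\<delta> \<le> 1"
  proof (rule l2_l2norm_leI)
    fix F :: "'g set" assume "finite F"
    have "(\<Sum>h\<in>F. (cmod (?\<delta> h))\<^sup>2) = (\<Sum>h\<in>F. if h = 0 then 1 else 0)"
      by (rule sum.cong) auto
    also have "\<dots> \<le> 1" using \<open>finite F\<close> by (simp add: sum.delta)
    finally have "(\<Sum>h\<in>F. (cmod (?\<delta> h))\<^sup>2) \<le> 1" .
    then show "L2_set (\<lambda>h. cmod (?\<delta> h)) F \<le> 1" unfolding L2_set_def by simp
  qed
  then show ?thesis
    unfolding hat_def using bounded_op_l2[OF assms] l2norm_le_opnorm[OF assms] by simp
qed

lemma finsupp_mult: "finsupp f \<Longrightarrow> finsupp (\<lambda>g. c g * f g)"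
  unfolding finsupp_def by (rule finite_subset[rotated]) auto

lemma finsupp_diff: "finsupp f \<Longrightarrow> finsupp f' \<Longrightarrow> finsupp (\<lambda>g. f g - f' g)"
  unfolding finsupp_def by (rule finite_subset[of _ "{g. f g \<noteq> 0} \<union> {g. f' g \<noteq> 0}"]) auto

lemma cocycle_trivial: "cocycle (\<lambda>_ _. 1)"
  unfolding cocycle_def by simp

lemma norm_cocycle: "cocycle \<sigma> \<Longrightarrow> cmod (\<sigma> g h) = 1"
  unfolding cocycle_def by blast

lemma cocycle_right_zero: "cocycle \<sigma> \<Longrightarrow> \<sigma> g 0 = 1"
  unfolding cocycle_def by blast

lemma pi_s_eq_sum:
  assumes "finite S" "{g. f g \<noteq> 0} \<subseteq> S"
  shows "pi_s \<sigma> f \<xi> h = (\<Sum>g\<in>S. f g * Lambda \<sigma> g \<xi> h)"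
  unfolding pi_s_def by (rule sum.mono_neutral_left) (use assms in auto)

lemma pi_s_zero: "pi_s \<sigma> (\<lambda>g. 0) = (\<lambda>\<xi> h. 0)"
  unfolding pi_s_def by simp

lemma pi_s_diff:
  assumes "finsupp f" "finsupp f'"
  shows "op_diff (pi_s \<sigma> f) (pi_s \<sigma> f') = pi_s \<sigma> (\<lambda>g. f g - f' g)"
proof (intro ext)
  fix \<xi> h
  let ?S = "{g. f g \<noteq> 0} \<union> {g. f' g \<noteq> 0}"
  have S: "finite ?S" using assms unfolding finsupp_def by auto
  have "op_diff (pi_s \<sigma> f) (pi_s \<sigma> f') \<xi> h
      = (\<Sum>g\<in>?S. f g * Lambda \<sigma> g \<xi> h) - (\<Sum>g\<in>?S. f' g * Lambda \<sigma> g \<xi> h)"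
    unfolding op_diff_def using pi_s_eq_sum[OF S] by auto
  also have "\<dots> = (\<Sum>g\<in>?S. (f g - f' g) * Lambda \<sigma> g \<xi> h)"
    by (simp add: sum_subtractf left_diff_distrib)
  also have "\<dots> = pi_s \<sigma> (\<lambda>g. f g - f' g) \<xi> h"
    by (rule pi_s_eq_sum[symmetric, OF S]) auto
  finally show "op_diff (pi_s \<sigma> f) (pi_s \<sigma> f') \<xi> h = pi_s \<sigma> (\<lambda>g. f g - f' g) \<xi> h" .
qed

lemma pi_s_mult:
  assumes "finsupp f"
  shows "pi_s \<sigma> (\<lambda>g. c * f g) = (\<lambda>\<xi> h. c * pi_s \<sigma> f \<xi> h)"
proof (intro ext)
  fix \<xi> h
  have S: "finite {g. f g \<noteq> 0}" using assms unfolding finsupp_def .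
  show "pi_s \<sigma> (\<lambda>g. c * f g) \<xi> h = c * pi_s \<sigma> f \<xi> h"
    using pi_s_eq_sum[OF S, of "\<lambda>g. c * f g"] pi_s_eq_sum[OF S, of f]
    by (auto simp: sum_distrib_left mult.assoc)
qed

lemma hat_pi_s:
  assumes "cocycle \<sigma>" "finsupp f"
  shows "hat (pi_s \<sigma> f) = f"
proof (intro ext)
  fix h
  let ?S = "insert h {g. f g \<noteq> 0}"
  have S: "finite ?S" using assms(2) unfolding finsupp_def by auto
  have "hat (pi_s \<sigma> f) h = (\<Sum>g\<in>?S. f g * Lambda \<sigma> g (\<lambda>k. if k = 0 then 1 else 0) h)"
    unfolding hat_def by (rule pi_s_eq_sum[OF S]) auto
  also have "\<dots> = (\<Sum>g\<in>?S. if g = h then f h else 0)"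
  proof (rule sum.cong)
    fix g
    have "- g + h = 0 \<longleftrightarrow> g = h"
      by (auto simp: add_eq_0_iff)
    then show "f g * Lambda \<sigma> g (\<lambda>k. if k = 0 then 1 else 0) h = (if g = h then f h else 0)"
      unfolding Lambda_def using cocycle_right_zero[OF assms(1)] by auto
  qed simp
  also have "\<dots> = f h" using S by simp
  finally show "hat (pi_s \<sigma> f) h = f h" .
qed

lemma l2_shift:
  fixes \<xi> :: "'g::group_add vec"
  shows "l2 (\<lambda>h. \<xi> (- g + h)) = l2 \<xi>" "l2norm (\<lambda>h. \<xi> (- g + h)) = l2norm \<xi>"
proof -
  have b: "bij_betw (\<lambda>h. - g + h) UNIV UNIV"
    by (rule bij_betw_byWitness[where f'="\<lambda>h. g + h"]) auto
  show "l2 (\<lambda>h. \<xi> (- g + h)) = l2 \<xi>"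
    unfolding l2_def using summable_on_reindex_bij_betw[OF b, of "\<lambda>h. (cmod (\<xi> h))\<^sup>2"] by simp
  show "l2norm (\<lambda>h. \<xi> (- g + h)) = l2norm \<xi>"
    unfolding l2norm_def using infsum_reindex_bij_betw[OF b, of "\<lambda>h. (cmod (\<xi> h))\<^sup>2"] by simp
qed

lemma l2_Lambda:
  assumes "cocycle \<sigma>" "l2 \<xi>"
  shows "l2 (Lambda \<sigma> g \<xi>) \<and> l2norm (Lambda \<sigma> g \<xi>) = l2norm \<xi>"
proof -
  have "cmod (Lambda \<sigma> g \<xi> h) = cmod (\<xi> (- g + h))" for h
    unfolding Lambda_def by (simp add: norm_mult norm_cocycle[OF assms(1)])
  then show ?thesis
    using l2_cong_norm[of "Lambda \<sigma> g \<xi>" "\<lambda>h. \<xi> (- g + h)"] l2_shift[of \<xi> g] assms(2) by simp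
qed

lemma l2_pi_s:
  assumes "cocycle \<sigma>" "finite S" "{g. f g \<noteq> 0} \<subseteq> S" "l2 \<xi>"
  shows "l2 (pi_s \<sigma> f \<xi>) \<and> l2norm (pi_s \<sigma> f \<xi>) \<le> (\<Sum>g\<in>S. cmod (f g)) * l2norm \<xi>"
proof -
  have "l2 (\<lambda>h. \<Sum>g\<in>S. f g * Lambda \<sigma> g \<xi> h) \<and>
      l2norm (\<lambda>h. \<Sum>g\<in>S. f g * Lambda \<sigma> g \<xi> h) \<le> (\<Sum>g\<in>S. cmod (f g) * l2norm \<xi>)"
  proof (rule l2_sum[OF assms(2)])
    fix g
    show "l2 (\<lambda>h. f g * Lambda \<sigma> g \<xi> h) \<and> l2norm (\<lambda>h. f g * Lambda \<sigma> g \<xi> h) \<le> cmod (f g) * l2norm \<xi>"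
      using l2_mult[of "Lambda \<sigma> g \<xi>" "f g"] l2_Lambda[OF assms(1,4), of g] by simp
  qed
  moreover have "pi_s \<sigma> f \<xi> = (\<lambda>h. \<Sum>g\<in>S. f g * Lambda \<sigma> g \<xi> h)"
    using pi_s_eq_sum[OF assms(2,3)] by blast
  ultimately show ?thesis by (simp add: sum_distrib_right)
qed

lemma bounded_op_pi_s:
  assumes "cocycle \<sigma>" "finsupp f"
  shows "bounded_op (pi_s \<sigma> f)"
proof (rule bounded_opI)
  show "l2 (pi_s \<sigma> f \<xi>) \<and> l2norm (pi_s \<sigma> f \<xi>) \<le> (\<Sum>g\<in>{g. f g \<noteq> 0}. cmod (f g)) * l2norm \<xi>"
    if "l2 \<xi>" for \<xi>
    by (rule l2_pi_s[OF assms(1) _ _ that]) (use assms(2) in \<open>auto simp: finsupp_def\<close>)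
  show "pi_s \<sigma> f (\<lambda>h. \<xi> h + c * \<eta> h) = (\<lambda>h. pi_s \<sigma> f \<xi> h + c * pi_s \<sigma> f \<eta> h)" for \<xi> \<eta> c
    unfolding pi_s_def Lambda_def
    by (auto simp: distrib_left sum.distrib sum_distrib_left mult.left_commute)
qed

lemma opnorm_pi_s_le_sum:
  assumes "cocycle \<sigma>" "finite S" "{g. f g \<noteq> 0} \<subseteq> S"
  shows "opnorm (pi_s \<sigma> f) \<le> (\<Sum>g\<in>S. cmod (f g))"
  using l2_pi_s[OF assms] by (intro opnorm_leI) (auto simp: sum_nonneg)

lemma opnorm_pi_s_zero:
  assumes "cocycle \<sigma>"
  shows "opnorm (pi_s \<sigma> (\<lambda>g. 0)) = 0"
proof -
  have "opnorm (pi_s \<sigma> (\<lambda>g. 0)) \<le> 0"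
    unfolding pi_s_zero by (rule opnorm_leI) simp_all
  moreover have "0 \<le> opnorm (pi_s \<sigma> (\<lambda>g. 0))"
    by (rule opnorm_nonneg[OF bounded_op_pi_s[OF assms]]) (simp add: finsupp_def)
  ultimately show ?thesis by linarith
qed

lemma opnorm_pi_s_eq_0D:
  assumes "cocycle \<sigma>" "finsupp f" "opnorm (pi_s \<sigma> f) = 0"
  shows "f = (\<lambda>g. 0)"
proof -
  have "l2 f" "l2norm f \<le> 0"
    using l2_hat[OF bounded_op_pi_s[OF assms(1,2)]] hat_pi_s[OF assms(1,2)] assms(3) by simp_all
  then show ?thesis using l2norm_eq_0 l2norm_nonneg[of f] by simp
qed

lemma opnorm_pi_s_le_abs:
  fixes \<sigma> :: "'g::group_add \<Rightarrow> 'g \<Rightarrow> complex"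
  assumes "cocycle \<sigma>" "finsupp f"
  shows "opnorm (pi_s \<sigma> f) \<le> opnorm (pi_s (\<lambda>_ _. 1) (\<lambda>g. complex_of_real (cmod (f g))))"
proof (rule opnorm_leI)
  let ?f = "\<lambda>g. complex_of_real (cmod (f g))" and ?S = "{g. f g \<noteq> 0}"
  have S: "finite ?S" using assms(2) unfolding finsupp_def .
  have "finsupp ?f" using assms(2) unfolding finsupp_def by simp
  then have bounded: "bounded_op (pi_s (\<lambda>_ _. 1) ?f)"
    by (rule bounded_op_pi_s[OF cocycle_trivial])
  then show "0 \<le> opnorm (pi_s (\<lambda>_ _. 1) ?f)" by (rule opnorm_nonneg)
  fix \<xi> :: "'g vec" assume \<xi>: "l2 \<xi>"
  let ?\<xi> = "\<lambda>h. complex_of_real (cmod (\<xi> h))"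
  have \<xi>': "l2 ?\<xi>" "l2norm ?\<xi> = l2norm \<xi>" using l2_cong_norm[of ?\<xi> \<xi>] \<xi> by auto
  have pointwise: "cmod (pi_s \<sigma> f \<xi> h) \<le> 1 * cmod (pi_s (\<lambda>_ _. 1) ?f ?\<xi> h)" for h
  proof -
    have "cmod (pi_s \<sigma> f \<xi> h) \<le> (\<Sum>g\<in>?S. cmod (f g * Lambda \<sigma> g \<xi> h))"
      unfolding pi_s_def by (rule norm_sum)
    also have "\<dots> = (\<Sum>g\<in>?S. cmod (f g) * cmod (\<xi> (- g + h)))"
      unfolding Lambda_def by (simp add: norm_mult norm_cocycle[OF assms(1)])
    also have "\<dots> = cmod (pi_s (\<lambda>_ _. 1) ?f ?\<xi> h)"
    proof -
      have eq: "pi_s (\<lambda>_ _. 1) ?f ?\<xi> h = complex_of_real (\<Sum>g\<in>?S. cmod (f g) * cmod (\<xi> (- g + h)))"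
        unfolding pi_s_def Lambda_def by simp
      show ?thesis
        unfolding eq norm_of_real by (intro abs_of_nonneg[symmetric] sum_nonneg) simp
    qed
    finally show ?thesis by simp
  qed
  have "l2norm (pi_s \<sigma> f \<xi>) \<le> 1 * l2norm (pi_s (\<lambda>_ _. 1) ?f ?\<xi>)"
    using l2_norm_le[OF bounded_op_l2[OF bounded \<xi>'(1)] pointwise] by simp
  also have "\<dots> \<le> opnorm (pi_s (\<lambda>_ _. 1) ?f) * l2norm \<xi>"
    using l2norm_apply_le[OF bounded \<xi>'(1)] \<xi>'(2) by simp
  finally show "l2norm (pi_s \<sigma> f \<xi>) \<le> opnorm (pi_s (\<lambda>_ _. 1) ?f) * l2norm \<xi>" .
qed

lemma fourier_partial_sum_eq_pi_s:
  assumes "finite F"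
  shows "(\<lambda>\<xi> h. \<Sum>g\<in>F. c g * Lambda \<sigma> g \<xi> h) = pi_s \<sigma> (\<lambda>g. if g \<in> F then c g else 0)"
proof (intro ext)
  fix \<xi> h
  have "pi_s \<sigma> (\<lambda>g. if g \<in> F then c g else 0) \<xi> h
      = (\<Sum>g\<in>F. (if g \<in> F then c g else 0) * Lambda \<sigma> g \<xi> h)"
    by (rule pi_s_eq_sum[OF assms]) auto
  then show "(\<Sum>g\<in>F. c g * Lambda \<sigma> g \<xi> h) = pi_s \<sigma> (\<lambda>g. if g \<in> F then c g else 0) \<xi> h"
    by simp
qed

definition multiplier_bound :: "('g::group_add \<Rightarrow> 'g \<Rightarrow> complex) \<Rightarrow> ('g \<Rightarrow> complex) \<Rightarrow> real \<Rightarrow> bool"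
  where "multiplier_bound \<sigma> \<phi> C \<longleftrightarrow> 0 \<le> C \<and>
    (\<forall>f. finsupp f \<longrightarrow> opnorm (pi_s \<sigma> (\<lambda>g. \<phi> g * f g)) \<le> C * opnorm (pi_s \<sigma> f))"

lemma multiplier_bound_nonneg: "multiplier_bound \<sigma> \<phi> C \<Longrightarrow> 0 \<le> C"
  unfolding multiplier_bound_def by blast

lemma multiplier_boundD:
  "multiplier_bound \<sigma> \<phi> C \<Longrightarrow> finsupp f \<Longrightarrow>
    opnorm (pi_s \<sigma> (\<lambda>g. \<phi> g * f g)) \<le> C * opnorm (pi_s \<sigma> f)"
  unfolding multiplier_bound_def by blast

lemma multiplier_bound_mono:
  fixes \<sigma> :: "'g::group_add \<Rightarrow> 'g \<Rightarrow> complex"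
  assumes "cocycle \<sigma>" "multiplier_bound \<sigma> \<phi> C" "C \<le> C'"
  shows "multiplier_bound \<sigma> \<phi> C'"
  unfolding multiplier_bound_def
proof (intro conjI allI impI)
  show "0 \<le> C'" using multiplier_bound_nonneg[OF assms(2)] assms(3) by linarith
  fix f :: "'g \<Rightarrow> complex" assume f: "finsupp f"
  have "C * opnorm (pi_s \<sigma> f) \<le> C' * opnorm (pi_s \<sigma> f)"
    using assms(3) opnorm_nonneg[OF bounded_op_pi_s[OF assms(1) f]] by (rule mult_right_mono)
  then show "opnorm (pi_s \<sigma> (\<lambda>g. \<phi> g * f g)) \<le> C' * opnorm (pi_s \<sigma> f)"
    using multiplier_boundD[OF assms(2) f] by linarith
qed

lemma MA_imp_multiplier_bound:
  fixes \<sigma> :: "'g::group_add \<Rightarrow> 'g \<Rightarrow> complex"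
  assumes "cocycle \<sigma>" "\<phi> \<in> MA \<sigma>"
  obtains C where "multiplier_bound \<sigma> \<phi> C"
proof -
  obtain C where C: "\<And>f. finsupp f \<Longrightarrow> opnorm (pi_s \<sigma> (\<lambda>g. \<phi> g * f g)) \<le> C * opnorm (pi_s \<sigma> f)"
    using assms(2) unfolding MA_def by blast
  have "multiplier_bound \<sigma> \<phi> \<bar>C\<bar>"
    unfolding multiplier_bound_def
  proof (intro conjI allI impI abs_ge_zero)
    fix f :: "'g \<Rightarrow> complex" assume f: "finsupp f"
    have "C * opnorm (pi_s \<sigma> f) \<le> \<bar>C\<bar> * opnorm (pi_s \<sigma> f)"
      using opnorm_nonneg[OF bounded_op_pi_s[OF assms(1) f]] by (intro mult_right_mono) auto
    then show "opnorm (pi_s \<sigma> (\<lambda>g. \<phi> g * f g)) \<le> \<bar>C\<bar> * opnorm (pi_s \<sigma> f)"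
      using C[OF f] by linarith
  qed
  then show ?thesis by (rule that)
qed

lemma multiplier_bound_diff:
  assumes "multiplier_bound \<sigma> \<phi> C" "finsupp f" "finsupp f'"
  shows "opnorm (op_diff (pi_s \<sigma> (\<lambda>g. \<phi> g * f g)) (pi_s \<sigma> (\<lambda>g. \<phi> g * f' g)))
    \<le> C * opnorm (op_diff (pi_s \<sigma> f) (pi_s \<sigma> f'))"
proof -
  have "(\<lambda>g. \<phi> g * f g - \<phi> g * f' g) = (\<lambda>g. \<phi> g * (f g - f' g))"
    by (simp add: algebra_simps)
  then show ?thesis
    unfolding pi_s_diff[OF finsupp_mult[where c=\<phi>, OF assms(2)] finsupp_mult[where c=\<phi>, OF assms(3)]]
      pi_s_diff[OF assms(2,3)]
    using multiplier_boundD[OF assms(1) finsupp_diff[OF assms(2,3)]] by simp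
qed

lemma multiplier_bound_diff_approx:
  assumes \<sigma>: "cocycle \<sigma>" and \<phi>: "multiplier_bound \<sigma> \<phi> D" and x: "bounded_op x"
    and f: "finsupp f" "finsupp f'"
  shows "opnorm (op_diff (pi_s \<sigma> (\<lambda>g. \<phi> g * f g)) (pi_s \<sigma> (\<lambda>g. \<phi> g * f' g)))
    \<le> D * opnorm (op_diff x (pi_s \<sigma> f)) + D * opnorm (op_diff x (pi_s \<sigma> f'))"
proof -
  have "opnorm (op_diff (pi_s \<sigma> f) (pi_s \<sigma> f'))
      \<le> opnorm (op_diff x (pi_s \<sigma> f)) + opnorm (op_diff x (pi_s \<sigma> f'))"
    using opnorm_triangle[OF bounded_op_pi_s[OF \<sigma> f(1)] x bounded_op_pi_s[OF \<sigma> f(2)]]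
      opnorm_diff_commute[of "pi_s \<sigma> f" x] by linarith
  then have "D * opnorm (op_diff (pi_s \<sigma> f) (pi_s \<sigma> f'))
      \<le> D * (opnorm (op_diff x (pi_s \<sigma> f)) + opnorm (op_diff x (pi_s \<sigma> f')))"
    using multiplier_bound_nonneg[OF \<phi>] by (rule mult_left_mono)
  then show ?thesis using multiplier_bound_diff[OF \<phi> f] by (simp add: distrib_left)
qed

lemma opnorm_le_Mnorm:
  assumes \<sigma>: "cocycle \<sigma>" and "\<phi> \<in> MA \<sigma>" and f: "finsupp f" "opnorm (pi_s \<sigma> f) \<le> 1"
  shows "opnorm (pi_s \<sigma> (\<lambda>g. \<phi> g * f g)) \<le> Mnorm \<sigma> \<phi>"
proof -
  obtain D where D: "multiplier_bound \<sigma> \<phi> D"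
    using MA_imp_multiplier_bound[OF assms(1,2)] by blast
  let ?unit = "{opnorm (pi_s \<sigma> (\<lambda>g. \<phi> g * f g)) | f. finsupp f \<and> opnorm (pi_s \<sigma> f) \<le> 1}"
  have "r \<le> D" if "r \<in> ?unit" for r
  proof -
    obtain f where f: "r = opnorm (pi_s \<sigma> (\<lambda>g. \<phi> g * f g))" "finsupp f" "opnorm (pi_s \<sigma> f) \<le> 1"
      using \<open>r \<in> ?unit\<close> by blast
    have "D * opnorm (pi_s \<sigma> f) \<le> D * 1"
      using f(3) multiplier_bound_nonneg[OF D] by (rule mult_left_mono)
    then show ?thesis using multiplier_boundD[OF D f(2)] f(1) by linarith
  qed
  then have "bdd_above ?unit" by (rule bdd_aboveI)
  then show ?thesis
    unfolding Mnorm_def by (rule cSup_upper[rotated]) (use f in blast)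
qed

lemma multiplier_bound_Mnorm:
  fixes \<sigma> :: "'g::group_add \<Rightarrow> 'g \<Rightarrow> complex"
  assumes \<sigma>: "cocycle \<sigma>" and \<phi>: "\<phi> \<in> MA \<sigma>"
  shows "multiplier_bound \<sigma> \<phi> (Mnorm \<sigma> \<phi>)"
proof -
  let ?M = "\<lambda>f. opnorm (pi_s \<sigma> (\<lambda>g. \<phi> g * f g))"
  have "finsupp (\<lambda>g::'g. 0)" by (simp add: finsupp_def)
  then have "0 \<le> Mnorm \<sigma> \<phi>"
    using opnorm_le_Mnorm[OF \<sigma> \<phi>, of "\<lambda>g. 0"] opnorm_pi_s_zero[OF \<sigma>] by simp
  moreover have "?M f \<le> Mnorm \<sigma> \<phi> * opnorm (pi_s \<sigma> f)" if f: "finsupp f" for f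
  proof (cases "opnorm (pi_s \<sigma> f) = 0")
    case True
    then show ?thesis using opnorm_pi_s_eq_0D[OF \<sigma> f] opnorm_pi_s_zero[OF \<sigma>] by simp
  next
    case False
    define t where "t = opnorm (pi_s \<sigma> f)"
    have t: "0 < t"
      using False opnorm_nonneg[OF bounded_op_pi_s[OF \<sigma> f]] unfolding t_def by simp
    define f' where "f' g = complex_of_real (1 / t) * f g" for g
    have f': "finsupp f'" unfolding f'_def by (rule finsupp_mult[OF f])
    have "opnorm (pi_s \<sigma> f') \<le> cmod (complex_of_real (1 / t)) * t"
      unfolding f'_def pi_s_mult[OF f] t_def by (rule opnorm_mult_le[OF bounded_op_pi_s[OF \<sigma> f]])
    also have "\<dots> = 1" using t by (simp add: norm_divide)
    finally have unit: "?M f' \<le> Mnorm \<sigma> \<phi>" by (rule opnorm_le_Mnorm[OF \<sigma> \<phi> f'])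
    have "(\<lambda>g. \<phi> g * f g) = (\<lambda>g. complex_of_real t * (\<phi> g * f' g))"
      unfolding f'_def using t by (auto simp: field_simps)
    then have "?M f = opnorm (\<lambda>\<xi> h. complex_of_real t * pi_s \<sigma> (\<lambda>g. \<phi> g * f' g) \<xi> h)"
      using pi_s_mult[OF finsupp_mult[OF f'], of \<sigma> "complex_of_real t" \<phi>] by simp
    also have "\<dots> \<le> t * ?M f'"
      using opnorm_mult_le[OF bounded_op_pi_s[OF \<sigma> finsupp_mult[where c=\<phi>, OF f']],
          of "complex_of_real t"] t
      by simp
    also have "\<dots> \<le> t * Mnorm \<sigma> \<phi>" using unit t by simp
    finally show ?thesis unfolding t_def by (simp add: mult.commute)
  qed
  ultimately show ?thesis unfolding multiplier_bound_def by blast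
qed

lemma Cauchy_if_norm_diff_le:
  fixes u :: "nat \<Rightarrow> 'a::real_normed_vector"
  assumes "\<And>m n. norm (u m - u n) \<le> b m + b n" and "b \<longlonglongrightarrow> 0"
  shows "Cauchy u"
proof (rule CauchyI)
  fix e :: real assume "0 < e"
  then have "\<forall>\<^sub>F n in sequentially. b n < e / 2"
    using assms(2) by (intro order_tendstoD(2)) auto
  then obtain M where M: "\<And>n. M \<le> n \<Longrightarrow> b n < e / 2"
    unfolding eventually_sequentially by blast
  have "norm (u m - u n) < e" if "M \<le> m" "M \<le> n" for m n
    using assms(1)[of m n] M[OF that(1)] M[OF that(2)] by linarith
  then show "\<exists>M. \<forall>m\<ge>M. \<forall>n\<ge>M. norm (u m - u n) < e" by blast
qed

lemma pointwise_limit_linear: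
  assumes T: "\<And>n. bounded_op (T n)" and y: "\<And>\<xi> h. l2 \<xi> \<Longrightarrow> (\<lambda>n. T n \<xi> h) \<longlonglongrightarrow> y \<xi> h"
    and "l2 \<xi>" "l2 \<eta>"
  shows "y (\<lambda>h. \<xi> h + c * \<eta> h) = (\<lambda>h. y \<xi> h + c * y \<eta> h)"
proof
  fix h
  have "l2 (\<lambda>h. \<xi> h + c * \<eta> h)"
    using l2_add[OF assms(3) conjunct1[OF l2_mult[OF assms(4)]]] by simp
  then have "(\<lambda>n. T n (\<lambda>h. \<xi> h + c * \<eta> h) h) \<longlonglongrightarrow> y (\<lambda>h. \<xi> h + c * \<eta> h) h"
    by (rule y)
  moreover have "(\<lambda>n. T n (\<lambda>h. \<xi> h + c * \<eta> h) h) \<longlonglongrightarrow> y \<xi> h + c * y \<eta> h"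
    unfolding bounded_op_linear[OF T assms(3,4)] by (intro tendsto_intros y assms(3,4))
  ultimately show "y (\<lambda>h. \<xi> h + c * \<eta> h) h = y \<xi> h + c * y \<eta> h"
    by (rule LIMSEQ_unique)
qed

lemma l2_op_diff_pointwise_limit:
  fixes T :: "nat \<Rightarrow> 'a op"
  assumes T: "\<And>n. bounded_op (T n)"
    and Cauchy: "\<And>m n. opnorm (op_diff (T m) (T n)) \<le> b m + b n"
    and b: "b \<longlonglongrightarrow> 0"
    and y: "\<And>\<xi> h. l2 \<xi> \<Longrightarrow> (\<lambda>n. T n \<xi> h) \<longlonglongrightarrow> y \<xi> h"
    and \<xi>: "l2 \<xi>"
  shows "l2 (op_diff y (T n) \<xi>) \<and> l2norm (op_diff y (T n) \<xi>) \<le> b n * l2norm \<xi>"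
proof -
  have TT: "bounded_op (op_diff (T m) (T n))" for m
    using bounded_op_diff[OF T T] .
  have "l2 (op_diff y (T n) \<xi>) \<and> l2norm (op_diff y (T n) \<xi>) \<le> (0 + b n) * l2norm \<xi>"
  proof (rule l2_pointwise_limit)
    show "\<forall>\<^sub>F m in sequentially. l2 (op_diff (T m) (T n) \<xi>) \<and>
        l2norm (op_diff (T m) (T n) \<xi>) \<le> (b m + b n) * l2norm \<xi>"
    proof (intro always_eventually allI)
      fix m
      have "l2norm (op_diff (T m) (T n) \<xi>) \<le> opnorm (op_diff (T m) (T n)) * l2norm \<xi>"
        by (rule l2norm_apply_le[OF TT \<xi>])
      also have "\<dots> \<le> (b m + b n) * l2norm \<xi>"
        by (rule mult_right_mono[OF Cauchy l2norm_nonneg])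
      finally show "l2 (op_diff (T m) (T n) \<xi>) \<and> l2norm (op_diff (T m) (T n) \<xi>) \<le> (b m + b n) * l2norm \<xi>"
        using bounded_op_l2[OF TT \<xi>] by simp
    qed
    show "(\<lambda>m. op_diff (T m) (T n) \<xi> h) \<longlonglongrightarrow> op_diff y (T n) \<xi> h" for h
      unfolding op_diff_def by (intro tendsto_intros y \<xi>)
    show "(\<lambda>m. (b m + b n) * l2norm \<xi>) \<longlonglongrightarrow> (0 + b n) * l2norm \<xi>"
      by (intro tendsto_intros b)
  qed
  then show ?thesis by simp
qed

lemma bounded_op_pointwise_limit:
  fixes T :: "nat \<Rightarrow> 'a op"
  assumes T: "\<And>n. bounded_op (T n)"
    and Cauchy: "\<And>m n. opnorm (op_diff (T m) (T n)) \<le> b m + b n"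
    and b: "b \<longlonglongrightarrow> 0"
    and y: "\<And>\<xi> h. l2 \<xi> \<Longrightarrow> (\<lambda>n. T n \<xi> h) \<longlonglongrightarrow> y \<xi> h"
  shows "bounded_op y" "opnorm (op_diff y (T n)) \<le> b n"
proof -
  have close: "l2 (op_diff y (T n) \<xi>) \<and> l2norm (op_diff y (T n) \<xi>) \<le> b n * l2norm \<xi>"
    if "l2 \<xi>" for n \<xi>
    by (rule l2_op_diff_pointwise_limit[OF T Cauchy b _ that]) (rule y)
  show "bounded_op y"
  proof (rule bounded_opI[where C="b 0 + opnorm (T 0)"])
    fix \<xi> :: "'a vec" assume \<xi>: "l2 \<xi>"
    have A: "l2 (op_diff y (T 0) \<xi>)" "l2norm (op_diff y (T 0) \<xi>) \<le> b 0 * l2norm \<xi>"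
      using close[OF \<xi>, of 0] by simp_all
    have B: "l2 (T 0 \<xi>)" "l2norm (T 0 \<xi>) \<le> opnorm (T 0) * l2norm \<xi>"
      using bounded_op_l2[OF T \<xi>] l2norm_apply_le[OF T \<xi>] by simp_all
    have "y \<xi> = (\<lambda>h. op_diff y (T 0) \<xi> h + T 0 \<xi> h)"
      unfolding op_diff_def by simp
    then show "l2 (y \<xi>) \<and> l2norm (y \<xi>) \<le> (b 0 + opnorm (T 0)) * l2norm \<xi>"
      using l2_add[OF A(1) B(1)] A(2) B(2) by (auto simp: distrib_right)
  qed (rule pointwise_limit_linear[OF T y])
  have "0 \<le> b n"
    using Cauchy[of n n] opnorm_nonneg[OF bounded_op_diff[OF T T, of n n]] by linarith
  then show "opnorm (op_diff y (T n)) \<le> b n"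
    using close by (intro opnorm_leI) auto
qed

lemma bounded_op_Cauchy_limit:
  fixes T :: "nat \<Rightarrow> 'a op"
  assumes T: "\<And>n. bounded_op (T n)"
    and Cauchy: "\<And>m n. opnorm (op_diff (T m) (T n)) \<le> b m + b n"
    and b: "b \<longlonglongrightarrow> 0"
  obtains y where "bounded_op y" "\<And>n. opnorm (op_diff y (T n)) \<le> b n"
proof -
  have "Cauchy (\<lambda>n. T n \<xi> h)" if \<xi>: "l2 \<xi>" for \<xi> h
  proof (rule Cauchy_if_norm_diff_le)
    fix m n
    have TT: "bounded_op (op_diff (T m) (T n))" using bounded_op_diff[OF T T] .
    have "cmod (T m \<xi> h - T n \<xi> h) \<le> l2norm (op_diff (T m) (T n) \<xi>)"
      using norm_le_l2norm[OF bounded_op_l2[OF TT \<xi>], of h] unfolding op_diff_def by simp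
    also have "\<dots> \<le> (b m + b n) * l2norm \<xi>"
      using l2norm_apply_le[OF TT \<xi>] mult_right_mono[OF Cauchy[of m n] l2norm_nonneg[of \<xi>]] by linarith
    finally show "cmod (T m \<xi> h - T n \<xi> h) \<le> b m * l2norm \<xi> + b n * l2norm \<xi>"
      by (simp add: distrib_right)
  next
    show "(\<lambda>n. b n * l2norm \<xi>) \<longlonglongrightarrow> 0"
      by (rule tendsto_mult_left_zero[OF b])
  qed
  then have "(\<lambda>n. T n \<xi> h) \<longlonglongrightarrow> lim (\<lambda>n. T n \<xi> h)" if "l2 \<xi>" for \<xi> h
    using that by (simp add: Cauchy_convergent_iff convergent_LIMSEQ_iff)
  from bounded_op_pointwise_limit[OF T Cauchy b this] show ?thesis by (rule that)
qed

lemma Cr_bounded_op: "x \<in> Cr \<sigma> \<Longrightarrow> bounded_op x"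
  unfolding Cr_def by blast

lemma Cr_approx:
  assumes "x \<in> Cr \<sigma>" "0 < e"
  obtains f where "finsupp f" "opnorm (op_diff x (pi_s \<sigma> f)) < e"
  using assms unfolding Cr_def by blast

lemma is_MextI:
  assumes \<sigma>: "cocycle \<sigma>" and \<phi>: "multiplier_bound \<sigma> \<phi> D" and x: "bounded_op x" and y: "bounded_op y"
    and approx: "\<And>e. 0 < e \<Longrightarrow> \<exists>f. finsupp f \<and> opnorm (op_diff x (pi_s \<sigma> f)) < e \<and>
      opnorm (op_diff y (pi_s \<sigma> (\<lambda>g. \<phi> g * f g))) \<le> D * e"
  shows "is_Mext \<sigma> \<phi> x y"
  unfolding is_Mext_def
proof (intro conjI y allI impI)
  fix \<epsilon> :: real assume \<epsilon>: "0 < \<epsilon>"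
  let ?M = "\<lambda>f. pi_s \<sigma> (\<lambda>g. \<phi> g * f g)"
  have D: "0 \<le> D" by (rule multiplier_bound_nonneg[OF \<phi>])
  define \<delta> where "\<delta> = \<epsilon> / (3 * (D + 1))"
  have \<delta>: "0 < \<delta>" unfolding \<delta>_def using \<epsilon> D by simp
  have "opnorm (op_diff y (?M f)) < \<epsilon>" if f: "finsupp f" "opnorm (op_diff x (pi_s \<sigma> f)) < \<delta>" for f
  proof -
    obtain f' where f': "finsupp f'" "opnorm (op_diff x (pi_s \<sigma> f')) < \<delta>" "opnorm (op_diff y (?M f')) \<le> D * \<delta>"
      using approx[OF \<delta>] by blast
    have "D * opnorm (op_diff x (pi_s \<sigma> f')) \<le> D * \<delta>" "D * opnorm (op_diff x (pi_s \<sigma> f)) \<le> D * \<delta>"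
      using f'(2) f(2) D by (intro mult_left_mono; simp)+
    then have "opnorm (op_diff y (?M f)) \<le> 3 * (D * \<delta>)"
      using opnorm_triangle[OF y bounded_op_pi_s[OF \<sigma> finsupp_mult[where c=\<phi>, OF f'(1)]]
          bounded_op_pi_s[OF \<sigma> finsupp_mult[where c=\<phi>, OF f(1)]]]
        f'(3) multiplier_bound_diff_approx[OF \<sigma> \<phi> x f'(1) f(1)]
      by linarith
    also have "\<dots> = D / (D + 1) * \<epsilon>"
      using D unfolding \<delta>_def by (simp add: field_simps add_nonneg_eq_0_iff)
    also have "\<dots> < \<epsilon>" using \<epsilon> D by (simp add: pos_divide_less_eq)
    finally show ?thesis .
  qed
  with \<delta> show "\<exists>\<delta>>0. \<forall>f. finsupp f \<longrightarrow> opnorm (op_diff x (pi_s \<sigma> f)) < \<delta> \<longrightarrow>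
      opnorm (op_diff y (?M f)) < \<epsilon>"
    by blast
qed

lemma Mext_exists:
  assumes \<sigma>: "cocycle \<sigma>" and \<phi>: "multiplier_bound \<sigma> \<phi> D" and x: "x \<in> Cr \<sigma>"
  shows "\<exists>y. is_Mext \<sigma> \<phi> x y"
proof -
  have D: "0 \<le> D" by (rule multiplier_bound_nonneg[OF \<phi>])
  have "\<forall>n. \<exists>f. finsupp f \<and> opnorm (op_diff x (pi_s \<sigma> f)) < inverse (real (Suc n))"
    using Cr_approx[OF x] by (metis inverse_positive_iff_positive of_nat_0_less_iff zero_less_Suc)
  then obtain fs where fs: "\<And>n. finsupp (fs n)"
    "\<And>n. opnorm (op_diff x (pi_s \<sigma> (fs n))) < inverse (real (Suc n))"
    by metis
  have fs_le: "D * opnorm (op_diff x (pi_s \<sigma> (fs n))) \<le> D * inverse (real (Suc n))" for n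
    using fs(2)[of n] D by (intro mult_left_mono) auto
  define M where "M f = pi_s \<sigma> (\<lambda>g. \<phi> g * f g)" for f
  have M: "bounded_op (M f)" if "finsupp f" for f
    unfolding M_def by (rule bounded_op_pi_s[OF \<sigma> finsupp_mult[OF that]])
  have Cauchy: "opnorm (op_diff (M (fs m)) (M (fs n)))
      \<le> D * inverse (real (Suc m)) + D * inverse (real (Suc n))" for m n
    using multiplier_bound_diff_approx[OF \<sigma> \<phi> Cr_bounded_op[OF x] fs(1)[of m] fs(1)[of n]]
      fs_le[of m] fs_le[of n]
    unfolding M_def by linarith
  have "(\<lambda>n. D * inverse (real (Suc n))) \<longlonglongrightarrow> 0"
    by (rule tendsto_mult_right_zero[OF LIMSEQ_inverse_real_of_nat])
  then obtain y where y: "bounded_op y"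
      "\<And>n. opnorm (op_diff y (M (fs n))) \<le> D * inverse (real (Suc n))"
    by (rule bounded_op_Cauchy_limit[OF M[OF fs(1)] Cauchy]) blast
  have "is_Mext \<sigma> \<phi> x y"
  proof (rule is_MextI[OF \<sigma> \<phi> Cr_bounded_op[OF x] y(1)])
    fix e :: real assume "0 < e"
    then obtain n where n: "inverse (real (Suc n)) < e" using reals_Archimedean by blast
    have "D * inverse (real (Suc n)) \<le> D * e" using n D by (intro mult_left_mono) auto
    then show "\<exists>f. finsupp f \<and> opnorm (op_diff x (pi_s \<sigma> f)) < e \<and>
        opnorm (op_diff y (pi_s \<sigma> (\<lambda>g. \<phi> g * f g))) \<le> D * e"
      using fs(1)[of n] fs(2)[of n] n y(2)[of n] unfolding M_def by force
  qed
  then show ?thesis by blast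
qed

lemma is_Mext_Mext:
  assumes "cocycle \<sigma>" "multiplier_bound \<sigma> \<phi> D" "x \<in> Cr \<sigma>"
  shows "is_Mext \<sigma> \<phi> x (Mext \<sigma> \<phi> x)"
  unfolding Mext_def using Mext_exists[OF assms] by (rule someI_ex)

lemma is_Mext_opnorm_le:
  assumes \<sigma>: "cocycle \<sigma>" and y: "is_Mext \<sigma> \<phi> x y" and x: "x \<in> Cr \<sigma>"
    and \<phi>: "multiplier_bound \<sigma> \<phi> C" and f: "finsupp f"
  shows "opnorm (op_diff y (pi_s \<sigma> (\<lambda>g. \<phi> g * f g))) \<le> C * opnorm (op_diff x (pi_s \<sigma> f))"
proof (rule field_le_epsilon)
  fix e :: real assume e: "0 < e"
  let ?M = "\<lambda>f. pi_s \<sigma> (\<lambda>g. \<phi> g * f g)"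
  have C: "0 \<le> C" by (rule multiplier_bound_nonneg[OF \<phi>])
  have "0 < e / 2" using e by simp
  then obtain \<delta> where \<delta>: "0 < \<delta>" "\<And>f'. finsupp f' \<Longrightarrow> opnorm (op_diff x (pi_s \<sigma> f')) < \<delta> \<Longrightarrow>
      opnorm (op_diff y (?M f')) < e / 2"
    using y unfolding is_Mext_def by blast
  have "0 < min \<delta> (e / (2 * (C + 1)))" using \<delta>(1) e C by simp
  then obtain f' where f': "finsupp f'" "opnorm (op_diff x (pi_s \<sigma> f')) < min \<delta> (e / (2 * (C + 1)))"
    by (rule Cr_approx[OF x])
  have "opnorm (op_diff y (?M f')) < e / 2"
    using f'(2) by (intro \<delta>(2)[OF f'(1)]) simp
  moreover have "C * opnorm (op_diff x (pi_s \<sigma> f')) \<le> e / 2"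
  proof -
    have "C * opnorm (op_diff x (pi_s \<sigma> f')) \<le> C * (e / (2 * (C + 1)))"
      using f'(2) C by (intro mult_left_mono) simp_all
    also have "\<dots> \<le> e / 2" using C e by (simp add: field_simps)
    finally show ?thesis .
  qed
  moreover have "bounded_op y" using y unfolding is_Mext_def by blast
  then have "opnorm (op_diff y (?M f)) \<le> opnorm (op_diff y (?M f')) + opnorm (op_diff (?M f') (?M f))"
    by (rule opnorm_triangle[OF _ bounded_op_pi_s[OF \<sigma> finsupp_mult[OF f'(1)]]
          bounded_op_pi_s[OF \<sigma> finsupp_mult[OF f]]])
  ultimately show "opnorm (op_diff y (?M f)) \<le> C * opnorm (op_diff x (pi_s \<sigma> f)) + e"
    using multiplier_bound_diff_approx[OF \<sigma> \<phi> Cr_bounded_op[OF x] f'(1) f] by linarith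
qed

lemma opnorm_pi_s_mult_diff_le:
  assumes "cocycle \<sigma>" "finsupp f"
  shows "opnorm (op_diff (pi_s \<sigma> (\<lambda>g. \<phi> g * f g)) (pi_s \<sigma> f))
    \<le> (\<Sum>g\<in>{g. f g \<noteq> 0}. cmod (\<phi> g - 1) * cmod (f g))"
proof -
  have eq: "op_diff (pi_s \<sigma> (\<lambda>g. \<phi> g * f g)) (pi_s \<sigma> f) = pi_s \<sigma> (\<lambda>g. \<phi> g * f g - f g)"
    by (rule pi_s_diff[OF finsupp_mult[OF assms(2)] assms(2)])
  have "opnorm (pi_s \<sigma> (\<lambda>g. \<phi> g * f g - f g)) \<le> (\<Sum>g\<in>{g. f g \<noteq> 0}. cmod (\<phi> g * f g - f g))"
    using assms(2) unfolding finsupp_def by (intro opnorm_pi_s_le_sum[OF assms(1)]) auto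
  also have "\<dots> = (\<Sum>g\<in>{g. f g \<noteq> 0}. cmod (\<phi> g - 1) * cmod (f g))"
    by (simp add: norm_mult[symmetric] left_diff_distrib)
  finally show ?thesis unfolding eq .
qed

lemma directed_eventually_finite:
  fixes P :: "'a \<Rightarrow> 'i::preorder \<Rightarrow> bool"
  assumes "directed TYPE('i)" "finite S" "\<And>g. g \<in> S \<Longrightarrow> \<exists>a0. \<forall>a\<ge>a0. P g a"
  shows "\<exists>a0. \<forall>a\<ge>a0. \<forall>g\<in>S. P g a"
  using assms(2,3)
proof (induction S rule: finite_induct)
  case (insert g S)
  obtain a1 where a1: "\<forall>a\<ge>a1. \<forall>g\<in>S. P g a" using insert by blast
  obtain a2 where a2: "\<forall>a\<ge>a2. P g a" using insert by blast
  obtain c where "a1 \<le> c" "a2 \<le> c" using assms(1) unfolding directed_def by blast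
  then have "\<forall>a\<ge>c. \<forall>g'\<in>insert g S. P g' a"
    using a1 a2 order_trans by blast
  then show ?case by blast
qed simp

lemma kappa_decayingE:
  assumes "kappa_decaying \<kappa>"
  obtains K where "0 \<le> K"
    "\<And>f. finsupp f \<Longrightarrow> opnorm (pi_s (\<lambda>_ _. 1) f) \<le> K * l2norm (\<lambda>g. f g * complex_of_real (\<kappa> g))"
proof -
  obtain K where K: "\<And>f. finsupp f \<Longrightarrow>
      opnorm (pi_s (\<lambda>_ _. 1) f) \<le> K * l2norm (\<lambda>g. f g * complex_of_real (\<kappa> g))"
    using assms unfolding kappa_decaying_def by blast
  have "opnorm (pi_s (\<lambda>_ _. 1) f) \<le> \<bar>K\<bar> * l2norm (\<lambda>g. f g * complex_of_real (\<kappa> g))"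
    if "finsupp f" for f
    using K[OF that] mult_right_mono[OF abs_ge_self l2norm_nonneg] order_trans by blast
  then show ?thesis using that abs_ge_zero by blast
qed

lemma l2_hat_diff_pi_s:
  assumes "cocycle \<sigma>" "bounded_op x" "finsupp f"
  shows "l2 (\<lambda>g. f g - hat x g) \<and> l2norm (\<lambda>g. f g - hat x g) \<le> opnorm (op_diff x (pi_s \<sigma> f))"
proof -
  have "hat (op_diff (pi_s \<sigma> f) x) = (\<lambda>g. f g - hat x g)"
    using hat_pi_s[OF assms(1,3)] unfolding hat_def op_diff_def by simp
  then show ?thesis
    using l2_hat[OF bounded_op_diff[OF bounded_op_pi_s[OF assms(1,3)] assms(2)]]
    by (simp add: opnorm_diff_commute)
qed

lemma opnorm_fourier_tail_le:
  fixes \<sigma> :: "'g::group_add \<Rightarrow> 'g \<Rightarrow> complex"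
  assumes \<sigma>: "cocycle \<sigma>" and x: "bounded_op x" and f: "finsupp f"
    and F: "finite F" "{g. f g \<noteq> 0} \<subseteq> F"
    and \<kappa>: "\<And>g. 0 \<le> \<kappa> g" and K: "0 \<le> K"
      "\<And>h. finsupp h \<Longrightarrow> opnorm (pi_s (\<lambda>_ _. 1) h) \<le> K * l2norm (\<lambda>g. h g * complex_of_real (\<kappa> g))"
    and B: "\<And>g. cmod (\<phi> g) * \<kappa> g \<le> B"
  shows "opnorm (op_diff (pi_s \<sigma> (\<lambda>g. \<phi> g * f g)) (pi_s \<sigma> (\<lambda>g. if g \<in> F then \<phi> g * hat x g else 0)))
    \<le> K * B * opnorm (op_diff x (pi_s \<sigma> f))"
proof -
  define d where "d g = (if g \<in> F then \<phi> g * (f g - hat x g) else 0)" for g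
  have d: "finsupp d"
    using F(1) unfolding finsupp_def d_def by (rule finite_subset[rotated]) auto
  have tail: "finsupp (\<lambda>g. if g \<in> F then \<phi> g * hat x g else 0)"
    using F(1) unfolding finsupp_def by (rule finite_subset[rotated]) auto
  have "\<phi> g * f g - (if g \<in> F then \<phi> g * hat x g else 0) = d g" for g
    using F(2) unfolding d_def by (cases "g \<in> F") (auto simp: right_diff_distrib)
  then have eq: "op_diff (pi_s \<sigma> (\<lambda>g. \<phi> g * f g)) (pi_s \<sigma> (\<lambda>g. if g \<in> F then \<phi> g * hat x g else 0))
      = pi_s \<sigma> d"
    using pi_s_diff[OF finsupp_mult[OF f] tail] by simp
  have e: "l2 (\<lambda>g. f g - hat x g)" "l2norm (\<lambda>g. f g - hat x g) \<le> opnorm (op_diff x (pi_s \<sigma> f))"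
    using l2_hat_diff_pi_s[OF \<sigma> x f] by simp_all
  have "0 \<le> cmod (\<phi> 0) * \<kappa> 0" using \<kappa>[of 0] by simp
  then have B0: "0 \<le> B" using B[of 0] by linarith
  have "cmod (complex_of_real (cmod (d g)) * complex_of_real (\<kappa> g)) \<le> B * cmod (f g - hat x g)" for g
  proof -
    have "cmod (complex_of_real (cmod (d g)) * complex_of_real (\<kappa> g)) \<le> cmod (\<phi> g) * \<kappa> g * cmod (f g - hat x g)"
      using \<kappa>[of g] unfolding d_def by (simp add: norm_mult)
    also have "\<dots> \<le> B * cmod (f g - hat x g)"
      using B[of g] by (rule mult_right_mono) simp
    finally show ?thesis .
  qed
  then have weighted: "l2norm (\<lambda>g. complex_of_real (cmod (d g)) * complex_of_real (\<kappa> g))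
      \<le> B * opnorm (op_diff x (pi_s \<sigma> f))"
    using l2_norm_le[OF e(1) _ B0] mult_left_mono[OF e(2) B0] by fastforce
  have "opnorm (pi_s \<sigma> d) \<le> opnorm (pi_s (\<lambda>_ _. 1) (\<lambda>g. complex_of_real (cmod (d g))))"
    by (rule opnorm_pi_s_le_abs[OF \<sigma> d])
  also have "\<dots> \<le> K * l2norm (\<lambda>g. complex_of_real (cmod (d g)) * complex_of_real (\<kappa> g))"
    using d by (intro K(2)) (simp add: finsupp_def)
  also have "\<dots> \<le> K * (B * opnorm (op_diff x (pi_s \<sigma> f)))"
    using weighted K(1) by (rule mult_left_mono)
  finally show ?thesis unfolding eq by (simp add: mult.assoc)
qed

lemma opnorm_Mext_fourier_partial_sum_le:
  fixes \<sigma> :: "'g::group_add \<Rightarrow> 'g \<Rightarrow> complex"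
  assumes \<sigma>: "cocycle \<sigma>" and \<phi>: "multiplier_bound \<sigma> \<phi> D" and x: "x \<in> Cr \<sigma>"
    and f: "finsupp f" and F: "finite F" "{g. f g \<noteq> 0} \<subseteq> F"
    and \<kappa>: "\<And>g. 0 \<le> \<kappa> g" and K: "0 \<le> K"
      "\<And>h. finsupp h \<Longrightarrow> opnorm (pi_s (\<lambda>_ _. 1) h) \<le> K * l2norm (\<lambda>g. h g * complex_of_real (\<kappa> g))"
    and B: "\<And>g. cmod (\<phi> g) * \<kappa> g \<le> B"
  shows "opnorm (op_diff (Mext \<sigma> \<phi> x) (\<lambda>\<xi> h. \<Sum>g\<in>F. \<phi> g * hat x g * Lambda \<sigma> g \<xi> h))
    \<le> (D + K * B) * opnorm (op_diff x (pi_s \<sigma> f))"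
proof -
  let ?Mf = "pi_s \<sigma> (\<lambda>g. \<phi> g * f g)" and ?tail = "\<lambda>g. if g \<in> F then \<phi> g * hat x g else 0"
  have y: "is_Mext \<sigma> \<phi> x (Mext \<sigma> \<phi> x)" by (rule is_Mext_Mext[OF \<sigma> \<phi> x])
  have "finsupp ?tail"
    using F(1) unfolding finsupp_def by (rule finite_subset[rotated]) auto
  moreover have "bounded_op (Mext \<sigma> \<phi> x)" using y unfolding is_Mext_def by blast
  ultimately have "opnorm (op_diff (Mext \<sigma> \<phi> x) (pi_s \<sigma> ?tail))
      \<le> opnorm (op_diff (Mext \<sigma> \<phi> x) ?Mf) + opnorm (op_diff ?Mf (pi_s \<sigma> ?tail))"
    by (intro opnorm_triangle bounded_op_pi_s[OF \<sigma>] finsupp_mult[OF f])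
  also have "\<dots> \<le> D * opnorm (op_diff x (pi_s \<sigma> f)) + K * B * opnorm (op_diff x (pi_s \<sigma> f))"
    using is_Mext_opnorm_le[OF \<sigma> y x \<phi> f] opnorm_fourier_tail_le[OF \<sigma> Cr_bounded_op[OF x] f F \<kappa> K B]
    by (rule add_mono)
  finally show ?thesis
    unfolding fourier_partial_sum_eq_pi_s[OF F(1), of "\<lambda>g. \<phi> g * hat x g"] by (simp add: distrib_right)
qed

lemma MCF_if_kappa_decaying:
  fixes \<sigma> :: "'g::group_add \<Rightarrow> 'g \<Rightarrow> complex"
  assumes \<sigma>: "cocycle \<sigma>" and \<phi>: "\<phi> \<in> MA \<sigma>"
    and \<kappa>: "\<And>g. 0 \<le> \<kappa> g" "kappa_decaying \<kappa>" and B: "\<And>g. cmod (\<phi> g) * \<kappa> g \<le> B"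
  shows "\<phi> \<in> MCF \<sigma>"
  unfolding MCF_def
proof (intro CollectI ballI)
  fix x assume x: "x \<in> Cr \<sigma>"
  obtain D where D: "multiplier_bound \<sigma> \<phi> D"
    using MA_imp_multiplier_bound[OF \<sigma> \<phi>] by blast
  obtain K where K: "0 \<le> K"
    "\<And>h. finsupp h \<Longrightarrow> opnorm (pi_s (\<lambda>_ _. 1) h) \<le> K * l2norm (\<lambda>g. h g * complex_of_real (\<kappa> g))"
    using kappa_decayingE[OF \<kappa>(2)] by blast
  have "0 \<le> cmod (\<phi> 0) * \<kappa> 0" using \<kappa>(1)[of 0] by simp
  then have "0 \<le> B" using B[of 0] by linarith
  then have "0 \<le> K * B" using K(1) by simp
  then have L: "0 \<le> D + K * B" "0 < D + K * B + 1"
    using multiplier_bound_nonneg[OF D] by linarith+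
  have "\<exists>F. finite F \<and> (\<forall>F'. finite F' \<and> F \<subseteq> F' \<longrightarrow>
      opnorm (op_diff (Mext \<sigma> \<phi> x) (\<lambda>\<xi> h. \<Sum>g\<in>F'. \<phi> g * hat x g * Lambda \<sigma> g \<xi> h)) < \<epsilon>)"
    if \<epsilon>: "0 < \<epsilon>" for \<epsilon>
  proof -
    have "0 < \<epsilon> / (D + K * B + 1)" using \<epsilon> L by simp
    then obtain f where f: "finsupp f" "opnorm (op_diff x (pi_s \<sigma> f)) < \<epsilon> / (D + K * B + 1)"
      by (rule Cr_approx[OF x])
    have "opnorm (op_diff (Mext \<sigma> \<phi> x) (\<lambda>\<xi> h. \<Sum>g\<in>F'. \<phi> g * hat x g * Lambda \<sigma> g \<xi> h)) < \<epsilon>"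
      if F': "finite F'" "{g. f g \<noteq> 0} \<subseteq> F'" for F'
    proof -
      have "opnorm (op_diff (Mext \<sigma> \<phi> x) (\<lambda>\<xi> h. \<Sum>g\<in>F'. \<phi> g * hat x g * Lambda \<sigma> g \<xi> h))
          \<le> (D + K * B) * opnorm (op_diff x (pi_s \<sigma> f))"
        by (rule opnorm_Mext_fourier_partial_sum_le[OF \<sigma> D x f(1) F' \<kappa>(1) K B])
      also have "\<dots> \<le> (D + K * B) * (\<epsilon> / (D + K * B + 1))"
        using f(2) L(1) by (intro mult_left_mono) simp_all
      also have "\<dots> < \<epsilon>" using L \<epsilon> by (simp add: field_simps)
      finally show ?thesis .
    qed
    then show ?thesis using f(1) unfolding finsupp_def by blast
  qed
  moreover have "bounded_op (Mext \<sigma> \<phi> x)"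
    using is_Mext_Mext[OF \<sigma> D x] unfolding is_Mext_def by blast
  ultimately show "\<exists>y. bounded_op y \<and> (\<forall>\<epsilon>>0. \<exists>F. finite F \<and> (\<forall>F'. finite F' \<and> F \<subseteq> F' \<longrightarrow>
      opnorm (op_diff y (\<lambda>\<xi> h. \<Sum>g\<in>F'. \<phi> g * hat x g * Lambda \<sigma> g \<xi> h)) < \<epsilon>))"
    by blast
qed

lemma opnorm_Mext_diff_self_le:
  assumes \<sigma>: "cocycle \<sigma>" and \<phi>: "multiplier_bound \<sigma> \<phi> C" and x: "x \<in> Cr \<sigma>" and f: "finsupp f"
  shows "opnorm (op_diff (Mext \<sigma> \<phi> x) x)
    \<le> (C + 1) * opnorm (op_diff x (pi_s \<sigma> f)) + (\<Sum>g\<in>{g. f g \<noteq> 0}. cmod (\<phi> g - 1) * cmod (f g))"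
proof -
  let ?y = "Mext \<sigma> \<phi> x" and ?Mf = "pi_s \<sigma> (\<lambda>g. \<phi> g * f g)"
  have y: "is_Mext \<sigma> \<phi> x ?y" by (rule is_Mext_Mext[OF \<sigma> \<phi> x])
  have bounded: "bounded_op ?y" "bounded_op ?Mf" "bounded_op (pi_s \<sigma> f)" "bounded_op x"
    using y Cr_bounded_op[OF x] bounded_op_pi_s[OF \<sigma> finsupp_mult[OF f]] bounded_op_pi_s[OF \<sigma> f]
    unfolding is_Mext_def by simp_all
  show ?thesis
    using opnorm_triangle[OF bounded(1,2,4)] opnorm_triangle[OF bounded(2,3,4)]
      is_Mext_opnorm_le[OF \<sigma> y x \<phi> f] opnorm_pi_s_mult_diff_le[OF \<sigma> f, of \<phi>]
      opnorm_diff_commute[of x "pi_s \<sigma> f"]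
    by (simp add: distrib_right)
qed

lemma Mext_tendsto_self:
  fixes \<sigma> :: "'g::group_add \<Rightarrow> 'g \<Rightarrow> complex" and \<phi> :: "'i::preorder \<Rightarrow> 'g \<Rightarrow> complex"
  assumes \<sigma>: "cocycle \<sigma>" and dir: "directed TYPE('i)"
    and bound: "\<And>\<alpha>. multiplier_bound \<sigma> (\<phi> \<alpha>) C"
    and pointwise: "\<And>g \<epsilon>. 0 < \<epsilon> \<Longrightarrow> \<exists>\<alpha>0. \<forall>\<alpha>\<ge>\<alpha>0. cmod (\<phi> \<alpha> g - 1) < \<epsilon>"
    and x: "x \<in> Cr \<sigma>" and \<epsilon>: "0 < \<epsilon>"
  shows "\<exists>\<alpha>0. \<forall>\<alpha>\<ge>\<alpha>0. opnorm (op_diff (Mext \<sigma> (\<phi> \<alpha>) x) x) < \<epsilon>"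
proof -
  have C: "0 < C + 1" using multiplier_bound_nonneg[OF bound] by simp
  then have "0 < \<epsilon> / (2 * (C + 1))" using \<epsilon> by simp
  then obtain f where f: "finsupp f" "opnorm (op_diff x (pi_s \<sigma> f)) < \<epsilon> / (2 * (C + 1))"
    by (rule Cr_approx[OF x])
  define S where "S = {g. f g \<noteq> 0}"
  have S: "finite S" using f(1) unfolding S_def finsupp_def .
  define s where "s = (\<Sum>g\<in>S. cmod (f g))"
  have s: "0 \<le> s" unfolding s_def by (simp add: sum_nonneg)
  then have "0 < \<epsilon> / (2 * (s + 1))" using \<epsilon> by simp
  then have "\<exists>\<alpha>0. \<forall>\<alpha>\<ge>\<alpha>0. \<forall>g\<in>S. cmod (\<phi> \<alpha> g - 1) < \<epsilon> / (2 * (s + 1))"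
    by (intro directed_eventually_finite[OF dir S] pointwise)
  then obtain \<alpha>0 where \<alpha>0: "\<forall>\<alpha>\<ge>\<alpha>0. \<forall>g\<in>S. cmod (\<phi> \<alpha> g - 1) < \<epsilon> / (2 * (s + 1))"
    by blast
  have "opnorm (op_diff (Mext \<sigma> (\<phi> \<alpha>) x) x) < \<epsilon>" if \<alpha>: "\<alpha>0 \<le> \<alpha>" for \<alpha>
  proof -
    have "(\<Sum>g\<in>S. cmod (\<phi> \<alpha> g - 1) * cmod (f g)) \<le> (\<Sum>g\<in>S. \<epsilon> / (2 * (s + 1)) * cmod (f g))"
      using \<alpha>0 \<alpha> by (intro sum_mono mult_right_mono) (simp_all add: less_imp_le)
    also have "\<dots> < \<epsilon> / 2"
      unfolding s_def[symmetric] sum_distrib_left[symmetric] using s \<epsilon> by (simp add: field_simps)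
    finally have "(\<Sum>g\<in>S. cmod (\<phi> \<alpha> g - 1) * cmod (f g)) < \<epsilon> / 2" .
    moreover have "(C + 1) * opnorm (op_diff x (pi_s \<sigma> f)) < \<epsilon> / 2"
      using f(2) C by (simp add: field_simps)
    ultimately show ?thesis
      using opnorm_Mext_diff_self_le[OF \<sigma> bound x f(1), of \<alpha>] unfolding S_def by linarith
  qed
  then show ?thesis by blast
qed

theorem proposition5p8:
  fixes \<sigma> :: "'g::group_add \<Rightarrow> 'g \<Rightarrow> complex"
    and \<phi> :: "'i::preorder \<Rightarrow> 'g \<Rightarrow> complex"
  assumes "cocycle \<sigma>"
    and "directed TYPE('i)"
    and "\<forall>\<alpha>. \<phi> \<alpha> \<in> MA \<sigma>"
    and "\<forall>g. \<forall>\<epsilon>>0. \<exists>\<alpha>0. \<forall>\<alpha>\<ge>\<alpha>0. cmod (\<phi> \<alpha> g - 1) < \<epsilon>"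
    and "\<exists>C. \<forall>\<alpha>. Mnorm \<sigma> (\<phi> \<alpha>) \<le> C"
    and "\<forall>\<alpha>. \<exists>\<kappa>::'g \<Rightarrow> real. (\<forall>g. \<kappa> g \<ge> 1) \<and> kappa_decaying \<kappa> \<and>
           (\<exists>C. \<forall>g. cmod (\<phi> \<alpha> g) * \<kappa> g \<le> C)"
  shows "bounded_fourier_summing_net \<sigma> \<phi>"
proof -
  obtain C where C: "\<And>\<alpha>. Mnorm \<sigma> (\<phi> \<alpha>) \<le> C" using assms(5) by blast
  have bound: "multiplier_bound \<sigma> (\<phi> \<alpha>) (max C 0)" for \<alpha>
    using multiplier_bound_mono[OF assms(1) multiplier_bound_Mnorm[OF assms(1)]] assms(3) C
    by (meson max.coboundedI1)
  have "\<phi> \<alpha> \<in> MCF \<sigma>" for \<alpha>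
  proof -
    obtain \<kappa> B where \<kappa>: "\<And>g. 1 \<le> \<kappa> g" "kappa_decaying \<kappa>" "\<And>g. cmod (\<phi> \<alpha> g) * \<kappa> g \<le> B"
      using assms(6) by blast
    have "0 \<le> \<kappa> g" for g using \<kappa>(1)[of g] by linarith
    with \<kappa>(2,3) show ?thesis using MCF_if_kappa_decaying assms(1,3) by blast
  qed
  moreover have "\<forall>x\<in>Cr \<sigma>. \<forall>\<epsilon>>0. \<exists>\<alpha>0. \<forall>\<alpha>\<ge>\<alpha>0. opnorm (op_diff (Mext \<sigma> (\<phi> \<alpha>) x) x) < \<epsilon>"
  proof (intro ballI allI impI)
    fix x and \<epsilon> :: real assume "x \<in> Cr \<sigma>" "0 < \<epsilon>"
    with assms(4) show "\<exists>\<alpha>0. \<forall>\<alpha>\<ge>\<alpha>0. opnorm (op_diff (Mext \<sigma> (\<phi> \<alpha>) x) x) < \<epsilon>"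
      by (intro Mext_tendsto_self[OF assms(1,2) bound]) blast+
  qed
  ultimately show ?thesis
    using assms(5) unfolding bounded_fourier_summing_net_def fourier_summing_net_def by blast
qed

end
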